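(* Let $d\ge2$, $m\ge2$, and let $\mathbf{x}_1,\dots,\mathbf{x}_m$ be i.i.d. samples from $\mathrm{Unif}(\mathcal{X}_d)$. Then for $0<\eta<1$, $$\mathbb{P}\Big(\min_{i\ne j}\|\mathbf{x}_i-\mathbf{x}_j\|_2\le\eta\Big)<m^2\eta^{d-1}.$$
   Context: $\mathcal{X}_d=\mathbb{S}^{d-1}\times\mathbb{S}^{d-1}\subset\mathbb{R}^{2d}$. *)

theory Defs
  imports "HOL-Probability.Probability"
begin

text \<open>Uniform (normalised surface) measure on the unit sphere S^{d-1} in R^d, d = CARD('n):
  the law of x / |x| for x uniform on the open unit ball (cone-measure construction;
  the library has no surface measure).\<close>
definition unif_sphere :: "(real^'n::finite) measure" where
  "unif_sphere = distr (uniform_measure lborel (ball 0 1)) borel (\<lambda>x. x /\<^sub>R norm x)"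

text \<open>Uniform distribution on X_d = S^{d-1} x S^{d-1}, viewed in R^{2d}; the product
  type carries the Euclidean distance sqrt(|u-u'|^2 + |v-v'|^2).\<close>
definition unif_X :: "((real^'n::finite) \<times> (real^'n)) measure" where
  "unif_X = unif_sphere \<Otimes>\<^sub>M unif_sphere"

end

theory Submission
  imports Defs
begin

text \<open>
  A unit vector u lies within chordal distance \<eta> of a pole e iff u \<bullet> e \<ge> 1 - \<eta>^2/2. The part
  of the unit ball lying radially over this cap is contained in an ellipsoid centred at e/2, with
  semi-axis 3/2 along e and semi-axis \<beta> = sqrt (9/8 (\<eta>^2 - \<eta>^4/4)) across it, so the cap has
  normalised measure at most 3/2 \<beta>^(d-1); rotation invariance of Lebesgue measure reduces an
  arbitrary pole to a coordinate axis. Two points of \<open>X_d\<close> at distance at most \<eta> are close in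
  both factors, so by Fubini such a pair has probability at most (3/2 \<beta>^(d-1))^2 \<le> 2 \<eta>^(d-1).
  A union bound over the m(m-1)/2 pairs gives m(m-1) \<eta>^(d-1) < m^2 \<eta>^(d-1).
\<close>

section \<open>Rotation invariance of Lebesgue measure\<close>

text \<open>
  The library proves invariance of Lebesgue measure under orthogonal maps only for index types of
  class \<^class>\<open>wellorder\<close>; a well-ordered copy of an arbitrary finite index type lets us transport
  it along a permutation of coordinates.
\<close>

typedef ('a::finite) ordered_copy = "{..<CARD('a)}"
  by (rule exI[of _ 0]) (simp add: finite_UNIV_card_ge_0)

instantiation ordered_copy :: (finite) linorder
begin
definition less_eq_ordered_copy :: "'a ordered_copy \<Rightarrow> 'a ordered_copy \<Rightarrow> bool"
  where "x \<le> y \<longleftrightarrow> Rep_ordered_copy x \<le> Rep_ordered_copy y"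
definition less_ordered_copy :: "'a ordered_copy \<Rightarrow> 'a ordered_copy \<Rightarrow> bool"
  where "x < y \<longleftrightarrow> Rep_ordered_copy x < Rep_ordered_copy y"
instance
proof
  fix x y z :: "'a ordered_copy"
  show "x < y \<longleftrightarrow> x \<le> y \<and> \<not> y \<le> x"
    by (auto simp: less_eq_ordered_copy_def less_ordered_copy_def)
  show "x \<le> x"
    by (simp add: less_eq_ordered_copy_def)
  show "x \<le> y \<Longrightarrow> y \<le> z \<Longrightarrow> x \<le> z"
    by (simp add: less_eq_ordered_copy_def)
  show "x \<le> y \<Longrightarrow> y \<le> x \<Longrightarrow> x = y"
    by (simp add: less_eq_ordered_copy_def Rep_ordered_copy_inject[symmetric])
  show "x \<le> y \<or> y \<le> x"
    by (simp add: less_eq_ordered_copy_def linear)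
qed
end

lemma bij_betw_Rep_ordered_copy:
  "bij_betw (Rep_ordered_copy :: 'a::finite ordered_copy \<Rightarrow> nat) UNIV {..<CARD('a)}"
proof -
  interpret type_definition "Rep_ordered_copy :: 'a ordered_copy \<Rightarrow> nat" Abs_ordered_copy
      "{..<CARD('a)}"
    by (rule type_definition_ordered_copy)
  show ?thesis
    by (simp add: bij_betw_def inj_on_def Rep_inject Rep_range)
qed

instance ordered_copy :: (finite) finite
  by standard (simp add: bij_betw_finite[OF bij_betw_Rep_ordered_copy])

instance ordered_copy :: (finite) wellorder
proof
  fix P :: "'a ordered_copy \<Rightarrow> bool" and a :: "'a ordered_copy"
  assume step: "\<And>x. (\<And>y. y < x \<Longrightarrow> P y) \<Longrightarrow> P x"
  show "P a"
    by (induction a rule: measure_induct_rule[where f = Rep_ordered_copy])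
      (rule step, simp add: less_ordered_copy_def)
qed

lemma card_ordered_copy: "CARD('a::finite ordered_copy) = CARD('a)"
  using bij_betw_same_card[OF bij_betw_Rep_ordered_copy] by simp

lemma borel_measurable_linear:
  fixes f :: "'a::euclidean_space \<Rightarrow> 'b::euclidean_space"
  assumes "linear f"
  shows "f \<in> borel_measurable borel"
  using assms by (intro borel_measurable_continuous_onI linear_continuous_on)
    (simp add: linear_conv_bounded_linear)

lemma prod_Basis_vec: "(\<Prod>b\<in>(Basis :: (real^'n) set). f b) = (\<Prod>i\<in>UNIV. f (axis i 1))"
proof -
  have Basis: "(Basis :: (real^'n) set) = range (\<lambda>i. axis i 1)"
    by (auto simp: Basis_vec_def)
  show ?thesis
    unfolding Basis by (subst prod.reindex) (auto simp: inj_on_def axis_eq_axis)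
qed

lemma linear_vec_permute: "linear (\<lambda>x::real^'m. (\<chi> i. x $ h i) :: real^'n)"
  by (rule linearI) (simp_all add: vec_eq_iff)

lemma norm_vec_permute:
  fixes h :: "'n::finite \<Rightarrow> 'm::finite"
  assumes "bij h"
  shows "norm ((\<chi> i. x $ h i) :: real^'n) = norm (x :: real^'m)"
proof -
  have "(\<Sum>i\<in>UNIV. (x $ h i)\<^sup>2) = (\<Sum>j\<in>UNIV. (x $ j)\<^sup>2)"
    using sum.reindex_bij_betw[OF assms] .
  then show ?thesis
    by (simp add: norm_eq_sqrt_inner inner_vec_def power2_eq_square)
qed

lemma lborel_distr_vec_permute:
  fixes h :: "'n::finite \<Rightarrow> 'm::finite"
  assumes h: "bij h"
  shows "distr lborel borel (\<lambda>x::real^'m. (\<chi> i. x $ h i) :: real^'n) = lborel"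
proof (rule lborel_eqI[symmetric])
  let ?P = "\<lambda>x::real^'m. (\<chi> i. x $ h i) :: real^'n"
  fix l u :: "real^'n"
  assume lu: "\<And>b. b \<in> Basis \<Longrightarrow> l \<bullet> b \<le> u \<bullet> b"
  have le: "l $ i \<le> u $ i" for i
    using lu[of "axis i 1"] by (simp add: inner_axis)
  let ?l = "(\<chi> j. l $ inv h j) :: real^'m" and ?u = "(\<chi> j. u $ inv h j) :: real^'m"
  have hinv: "inv h (h i) = i" "h (inv h j) = j" for i j
    using h by (simp_all add: bij_is_inj bij_is_surj surj_f_inv_f)
  have pre: "?P -` box l u = box ?l ?u"
  proof (intro set_eqI iffI)
    fix x
    assume "x \<in> ?P -` box l u"
    then have "l $ i < x $ h i \<and> x $ h i < u $ i" for i
      by (simp add: mem_box_cart)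
    from this[of "inv h j" for j] show "x \<in> box ?l ?u"
      by (simp add: mem_box_cart hinv)
  next
    fix x
    assume "x \<in> box ?l ?u"
    then have "l $ inv h j < x $ j \<and> x $ j < u $ inv h j" for j
      by (simp add: mem_box_cart)
    from this[of "h i" for i] show "x \<in> ?P -` box l u"
      by (simp add: mem_box_cart hinv)
  qed
  have "emeasure (distr lborel borel ?P) (box l u) = emeasure lborel (box ?l ?u)"
    using borel_measurable_linear[OF linear_vec_permute[of h]] by (simp add: emeasure_distr pre)
  also have "\<dots> = (\<Prod>j\<in>UNIV. u $ inv h j - l $ inv h j)"
  proof -
    have "\<forall>b\<in>Basis. ?l \<bullet> b \<le> ?u \<bullet> b"
      using le by (auto simp: Basis_vec_def inner_axis)
    then show ?thesis
      by (simp add: emeasure_lborel_box_eq prod_Basis_vec inner_axis)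
  qed
  also have "\<dots> = (\<Prod>i\<in>UNIV. u $ i - l $ i)"
    using prod.reindex_bij_betw[OF bij_imp_bij_inv[OF h], of "\<lambda>i. u $ i - l $ i"] by simp
  finally show "emeasure (distr lborel borel ?P) (box l u) = (\<Prod>b\<in>Basis. (u - l) \<bullet> b)"
    by (simp add: prod_Basis_vec inner_axis)
qed simp

lemma lborel_distr_orthogonal_transformation_wellorder:
  fixes T :: "(real,'n::{finite,wellorder}) vec \<Rightarrow> (real,'n) vec"
  assumes T: "orthogonal_transformation T"
  shows "distr lborel borel T = lborel"
proof (rule lborel_eqI[symmetric])
  have meas: "T \<in> borel_measurable borel"
    using T by (simp add: borel_measurable_linear orthogonal_transformation_linear)
  have T': "orthogonal_transformation (inv T)"
    using T by (rule orthogonal_transformation_inv)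
  fix l u :: "(real,'n) vec"
  assume lu: "\<And>b. b \<in> Basis \<Longrightarrow> l \<bullet> b \<le> u \<bullet> b"
  have pre: "T -` box l u = inv T ` box l u"
    using T by (simp add: bij_vimage_eq_inv_image orthogonal_transformation_bij)
  have bounded: "bounded (T -` box l u)"
    unfolding pre using orthogonal_transformation_linear[OF T']
    by (simp add: bounded_linear_image linear_conv_bounded_linear)
  have "emeasure (distr lborel borel T) (box l u) = emeasure lborel (T -` box l u)"
    using meas by (simp add: emeasure_distr)
  also have "\<dots> = ennreal (measure lborel (T -` box l u))"
    using emeasure_bounded_finite[OF bounded] by (simp add: emeasure_eq_ennreal_measure less_top)
  also have "measure lborel (T -` box l u) = measure lebesgue (inv T ` box l u)"
    using meas by (simp add: measurable_sets_borel flip: pre)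
  also have "\<dots> = ennreal (measure lebesgue (box l u))"
    by (simp add: measure_orthogonal_image[OF T'])
  finally show "emeasure (distr lborel borel T) (box l u) = (\<Prod>b\<in>Basis. (u - l) \<bullet> b)"
    using lu by (simp add: measure_lborel_box_eq)
qed simp

lemma lborel_distr_orthogonal_transformation:
  fixes T :: "real^'n \<Rightarrow> real^'n"
  assumes T: "orthogonal_transformation T"
  shows "distr lborel borel T = lborel"
proof -
  obtain h :: "'n ordered_copy \<Rightarrow> 'n" where h: "bij h"
    using finite_same_card_bij[of "UNIV :: 'n ordered_copy set" "UNIV :: 'n set"]
    by (auto simp: card_ordered_copy)
  define P :: "real^'n \<Rightarrow> real^'n ordered_copy" where "P x = (\<chi> i. x $ h i)" for x
  define P' :: "real^'n ordered_copy \<Rightarrow> real^'n" where "P' y = (\<chi> j. y $ inv h j)" for y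
  have h': "bij (inv h)"
    using h by (rule bij_imp_bij_inv)
  have P: "distr lborel borel P = lborel" "linear P" "norm (P x) = norm x" for x
    unfolding P_def using h
    by (simp_all add: lborel_distr_vec_permute linear_vec_permute norm_vec_permute)
  have P': "distr lborel borel P' = lborel" "linear P'" "norm (P' y) = norm y" for y
    unfolding P'_def using h'
    by (simp_all add: lborel_distr_vec_permute linear_vec_permute norm_vec_permute)
  have "P' (P x) = x" for x
    using h by (simp add: P_def P'_def vec_eq_iff bij_is_surj surj_f_inv_f)
  then have decomp: "P' \<circ> ((P \<circ> T \<circ> P') \<circ> P) = T"
    by (simp add: fun_eq_iff)
  have "orthogonal_transformation (P \<circ> T \<circ> P')"
    using T P P'
    by (simp add: orthogonal_transformation linear_compose orthogonal_transformation_norm)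
  then have Q: "distr lborel borel (P \<circ> T \<circ> P') = lborel"
    "P \<circ> T \<circ> P' \<in> borel_measurable borel"
    by (simp_all add: lborel_distr_orthogonal_transformation_wellorder borel_measurable_linear
        orthogonal_transformation_linear)
  have mP: "P \<in> borel_measurable borel" "P' \<in> borel_measurable borel"
    using P P' by (simp_all add: borel_measurable_linear)
  have "distr lborel borel T = distr lborel borel (P' \<circ> ((P \<circ> T \<circ> P') \<circ> P))"
    by (simp only: decomp)
  also have "\<dots> = distr (distr (distr lborel borel P) borel (P \<circ> T \<circ> P')) borel P'"
    using mP Q by (simp add: distr_distr)
  also have "\<dots> = lborel"
    using P P' Q by simp
  finally show ?thesis .
qed

section \<open>Spherical caps\<close>

definition spherical_sector :: "'a::real_normed_vector \<Rightarrow> real \<Rightarrow> 'a set" where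
  "spherical_sector w \<eta> = {x \<in> ball 0 1. x /\<^sub>R norm x \<in> cball w \<eta>}"

text \<open>
  A cap of chordal radius \<open>\<eta>\<close> has angular radius with cosine \<open>a = 1 - \<eta>\<^sup>2/2\<close>; its sector lies in
  the ellipsoid centred at half the pole with semi-axis 3/2 along the pole and this semi-axis
  across it.
\<close>

definition cap_semiaxis :: "real \<Rightarrow> real" where
  "cap_semiaxis \<eta> = sqrt (9/8 * (1 - (1 - \<eta>\<^sup>2/2)\<^sup>2))"

lemma
  assumes "0 < \<eta>" "\<eta> < 1"
  shows cap_semiaxis_sq: "(cap_semiaxis \<eta>)\<^sup>2 = 9/8 * (1 - (1 - \<eta>\<^sup>2/2)\<^sup>2)"
    and cap_semiaxis_pos: "0 < cap_semiaxis \<eta>"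
proof -
  have "\<eta>\<^sup>2 < 1" "0 < \<eta>\<^sup>2"
    using assms by (simp_all add: abs_square_less_1)
  then have "(1 - \<eta>\<^sup>2/2)\<^sup>2 < 1"
    using power_strict_mono[of "1 - \<eta>\<^sup>2/2" 1 2] by simp
  then show "(cap_semiaxis \<eta>)\<^sup>2 = 9/8 * (1 - (1 - \<eta>\<^sup>2/2)\<^sup>2)" "0 < cap_semiaxis \<eta>"
    by (simp_all add: cap_semiaxis_def)
qed

lemma normalized_dist_le_imp_inner_ge:
  fixes y e :: "'a::real_inner"
  assumes "norm e = 1" "y \<noteq> 0" "dist e (y /\<^sub>R norm y) \<le> \<eta>"
  shows "(1 - \<eta>\<^sup>2/2) * norm y \<le> y \<bullet> e"
proof -
  define u where "u = y /\<^sub>R norm y"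
  have "e \<bullet> e = 1" "u \<bullet> u = 1"
    using assms(1,2) by (simp_all add: u_def flip: power2_norm_eq_inner)
  then have "(dist e u)\<^sup>2 = 2 - 2 * (e \<bullet> u)"
    by (simp add: dist_norm power2_norm_eq_inner inner_diff_left inner_diff_right inner_commute)
  also have "e \<bullet> u = (y \<bullet> e) / norm y"
    by (simp add: u_def inner_commute divide_inverse mult.commute)
  finally have "(dist e (y /\<^sub>R norm y))\<^sup>2 = 2 - 2 * (y \<bullet> e) / norm y"
    by (simp add: u_def)
  moreover have "(dist e (y /\<^sub>R norm y))\<^sup>2 \<le> \<eta>\<^sup>2"
    using assms(3) by (simp add: power_mono)
  ultimately have "2 - 2 * (y \<bullet> e) / norm y \<le> \<eta>\<^sup>2"
    by simp
  moreover have "0 < norm y"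
    using assms(2) by simp
  ultimately show ?thesis
    by (simp add: field_simps)
qed

text \<open>Here \<open>s\<close> and \<open>r\<close> are the height over the equator and the norm of a point of the sector.\<close>

lemma sector_ellipsoid_ineq:
  fixes a r s :: real
  assumes "0 \<le> a" "a < 1" "0 \<le> r" "r \<le> 1" "r * a \<le> s" "s \<le> r"
  shows "4/9 * (s - 1/2)\<^sup>2 + 8/9 * ((r\<^sup>2 - s\<^sup>2) / (1 - a\<^sup>2)) \<le> 1"
proof -
  have "0 \<le> s"
    using assms mult_nonneg_nonneg[of r a] by linarith
  then have "s * s \<le> s"
    using assms by (intro mult_left_le_one_le) auto
  then have "(s - 1/2)\<^sup>2 \<le> 1/4"
    by (simp add: power2_eq_square algebra_simps)
  moreover have "r\<^sup>2 - s\<^sup>2 \<le> 1 - a\<^sup>2"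
  proof -
    have "(r * a)\<^sup>2 \<le> s\<^sup>2"
      using assms by (intro power_mono) auto
    then have "r\<^sup>2 - s\<^sup>2 \<le> r\<^sup>2 * (1 - a\<^sup>2)"
      by (simp add: algebra_simps)
    also have "\<dots> \<le> 1 - a\<^sup>2"
      using assms by (intro mult_left_le_one_le) (auto simp: power_le_one abs_square_le_1)
    finally show ?thesis .
  qed
  then have "(r\<^sup>2 - s\<^sup>2) / (1 - a\<^sup>2) \<le> 1"
    using assms by (simp add: divide_le_eq abs_square_less_1)
  ultimately show ?thesis
    by linarith
qed

lemma norm_sq_vec_remove:
  fixes x :: "real^'n"
  shows "(norm x)\<^sup>2 = (x $ k)\<^sup>2 + (\<Sum>i\<in>UNIV - {k}. (x $ i)\<^sup>2)"
proof -
  have "(norm x)\<^sup>2 = (\<Sum>i\<in>UNIV. (x $ i)\<^sup>2)"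
    unfolding power2_norm_eq_inner inner_vec_def by (simp add: power2_eq_square)
  then show ?thesis
    by (simp add: sum.remove[of UNIV k])
qed

lemma spherical_sector_axis_subset_ellipsoid:
  fixes k :: "'n::finite" and \<eta> :: real
  defines "c \<equiv> \<lambda>i. if i = k then 3/2 else cap_semiaxis \<eta>"
  assumes "0 < \<eta>" "\<eta> < 1"
  shows "spherical_sector (axis k 1 :: real^'n) \<eta>
           \<subseteq> (+) ((1/2) *\<^sub>R axis k 1) ` (\<lambda>z. \<chi> i. c i * z $ i) ` cball 0 1"
proof
  define a where "a = 1 - \<eta>\<^sup>2/2"
  define \<beta> where "\<beta> = cap_semiaxis \<eta>"
  have "\<eta>\<^sup>2 < 1"
    using assms by (simp add: abs_square_less_1)
  then have a: "0 \<le> a" "a < 1"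
    using assms by (auto simp: a_def)
  have \<beta>: "\<beta>\<^sup>2 = 9/8 * (1 - a\<^sup>2)"
    using assms by (simp add: \<beta>_def a_def cap_semiaxis_sq)
  have "0 < \<beta>"
    using assms by (simp add: \<beta>_def cap_semiaxis_pos)
  fix y :: "real^'n"
  assume y: "y \<in> spherical_sector (axis k 1) \<eta>"
  have "y \<noteq> 0"
    using y assms by (auto simp: spherical_sector_def)
  then have sa: "norm y * a \<le> y $ k"
    using y normalized_dist_le_imp_inner_ge[of "axis k 1" y \<eta>]
    by (simp add: spherical_sector_def a_def inner_axis mult.commute)
  define z :: "real^'n" where "z = (\<chi> i. if i = k then (y $ k - 1/2) / (3/2) else y $ i / \<beta>)"
  have "(norm z)\<^sup>2 = 4/9 * (y $ k - 1/2)\<^sup>2 + (\<Sum>i\<in>UNIV - {k}. (y $ i)\<^sup>2) / \<beta>\<^sup>2"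
  proof -
    have "(\<Sum>i\<in>UNIV - {k}. (z $ i)\<^sup>2) = (\<Sum>i\<in>UNIV - {k}. (y $ i)\<^sup>2) / \<beta>\<^sup>2"
      by (simp add: z_def power_divide sum_divide_distrib)
    then show ?thesis
      unfolding norm_sq_vec_remove[of z k]
      by (simp add: z_def power_divide) (simp add: power2_eq_square algebra_simps)
  qed
  also have "(\<Sum>i\<in>UNIV - {k}. (y $ i)\<^sup>2) = (norm y)\<^sup>2 - (y $ k)\<^sup>2"
    by (simp add: norm_sq_vec_remove[of y k])
  also have "4/9 * (y $ k - 1/2)\<^sup>2 + ((norm y)\<^sup>2 - (y $ k)\<^sup>2) / \<beta>\<^sup>2 \<le> 1"
    using sector_ellipsoid_ineq[OF a norm_ge_zero _ sa abs_le_D1[OF component_le_norm_cart]] y a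
    by (simp add: \<beta> spherical_sector_def field_simps)
  finally have "norm z \<le> 1"
    by (simp add: power_le_one_iff)
  moreover have "y = (1/2) *\<^sub>R axis k 1 + (\<chi> i. c i * z $ i)"
    using \<open>0 < \<beta>\<close> by (simp add: vec_eq_iff z_def c_def \<beta>_def axis_def field_simps)
  ultimately show "y \<in> (+) ((1/2) *\<^sub>R axis k 1) ` (\<lambda>z. \<chi> i. c i * z $ i) ` cball 0 1"
    by auto
qed

lemma spherical_sector_borel: "spherical_sector w \<eta> \<in> sets (borel :: 'a::euclidean_space measure)"
proof -
  have "{x :: 'a. x \<in> ball 0 1 \<and> dist w (x /\<^sub>R norm x) \<le> \<eta>} \<in> sets borel"
    by measurable
  then show ?thesis
    by (simp add: spherical_sector_def)
qed

lemma measure_spherical_sector_axis_le: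
  fixes k :: "'n::finite"
  assumes "0 < \<eta>" "\<eta> < 1"
  shows "measure lborel (spherical_sector (axis k 1 :: real^'n) \<eta>)
           \<le> 3/2 * cap_semiaxis \<eta> ^ (CARD('n) - 1) * measure lborel (ball (0 :: real^'n) 1)"
proof -
  define c where "c = (\<lambda>i. if i = k then 3/2 else cap_semiaxis \<eta>)"
  define E where "E = (+) ((1/2) *\<^sub>R axis k 1) ` (\<lambda>z. \<chi> i. c i * z $ i) ` cball (0 :: real^'n) 1"
  have "prod c UNIV = 3/2 * cap_semiaxis \<eta> ^ (CARD('n) - 1)"
    by (simp add: c_def prod.remove[of UNIV k] card_Diff_singleton)
  then have "\<bar>prod c UNIV\<bar> = 3/2 * cap_semiaxis \<eta> ^ (CARD('n) - 1)"
    using cap_semiaxis_pos[OF assms] by (simp only:) simp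
  then have "measure lebesgue E
      = 3/2 * cap_semiaxis \<eta> ^ (CARD('n) - 1) * measure lebesgue (cball (0 :: real^'n) 1)"
    by (simp add: E_def measure_translation measure_stretch)
  moreover have "spherical_sector (axis k 1) \<eta> \<subseteq> E"
    using spherical_sector_axis_subset_ellipsoid[OF assms] by (simp add: E_def c_def)
  moreover have "E \<in> lmeasurable"
    by (simp add: E_def measurable_translation measurable_stretch)
  ultimately have "measure lebesgue (spherical_sector (axis k 1 :: real^'n) \<eta>)
      \<le> 3/2 * cap_semiaxis \<eta> ^ (CARD('n) - 1) * measure lebesgue (cball (0 :: real^'n) 1)"
    using spherical_sector_borel
    by (metis measure_mono_fmeasurable sets_completionI_sets sets_lborel)
  moreover have "measure lebesgue (spherical_sector (axis k 1 :: real^'n) \<eta>)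
      = measure lborel (spherical_sector (axis k 1 :: real^'n) \<eta>)"
    by (rule measure_completion) (simp add: spherical_sector_borel)
  ultimately show ?thesis
    by (simp add: content_cball_conv_ball)
qed

lemma spherical_sector_vimage_orthogonal_transformation:
  fixes T :: "'a::euclidean_space \<Rightarrow> 'a"
  assumes T: "orthogonal_transformation T"
  shows "T -` spherical_sector (T e) \<eta> = spherical_sector e \<eta>"
proof -
  have "T x /\<^sub>R norm (T x) = T (x /\<^sub>R norm x)" for x
    using T by (simp add: orthogonal_transformation_norm orthogonal_transformation_scaleR)
  moreover have "dist (T e) (T y) = dist e y" for y
    using T by (simp add: dist_norm orthogonal_transformation_norm
        flip: linear_diff[OF orthogonal_transformation_linear[OF T]])
  ultimately show ?thesis
    using T by (auto simp: spherical_sector_def orthogonal_transformation_norm)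
qed

lemma measure_spherical_sector_le:
  fixes w :: "real^'n"
  assumes "norm w = 1" "0 < \<eta>" "\<eta> < 1"
  shows "measure lborel (spherical_sector w \<eta>)
           \<le> 3/2 * cap_semiaxis \<eta> ^ (CARD('n) - 1) * measure lborel (ball (0 :: real^'n) 1)"
proof -
  fix k :: 'n
  have "norm (axis k 1 :: real^'n) = norm w"
    using assms(1) by simp
  then obtain T where T: "orthogonal_transformation T" "T (axis k (1::real)) = w"
    using orthogonal_transformation_exists by blast
  have "measure lborel (spherical_sector w \<eta>)
      = measure (distr lborel borel T) (spherical_sector w \<eta>)"
    using T by (simp add: lborel_distr_orthogonal_transformation)
  also have "\<dots> = measure lborel (spherical_sector (axis k (1::real)) \<eta>)"
    using T by (simp add: measure_distr borel_measurable_linear orthogonal_transformation_linear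
        spherical_sector_borel spherical_sector_vimage_orthogonal_transformation flip: T(2))
  finally show ?thesis
    using measure_spherical_sector_axis_le[OF assms(2,3)] by simp
qed

lemma
  fixes c :: "'a::euclidean_space"
  assumes "0 < r"
  shows emeasure_lborel_ball_neq_0: "emeasure lborel (ball c r) \<noteq> 0"
    and emeasure_lborel_ball_neq_infinity: "emeasure lborel (ball c r) \<noteq> \<infinity>"
  using emeasure_lborel_ball_finite[of c r] content_ball_pos[OF assms, of c]
  by (auto simp: emeasure_eq_ennreal_measure)

section \<open>The uniform measures on the sphere and on \<open>X_d\<close>\<close>

lemma prob_space_unif_sphere: "prob_space unif_sphere"
  unfolding unif_sphere_def
  by (intro prob_space.prob_space_distr prob_space_uniform_measure emeasure_lborel_ball_neq_0
      emeasure_lborel_ball_neq_infinity) simp_all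

lemma sets_unif_sphere: "sets unif_sphere = sets borel"
  by (simp add: unif_sphere_def)

lemma AE_unif_sphere_norm: "AE u in unif_sphere. norm u = 1"
proof -
  \<comment> \<open>The origin, sent to \<open>0 /\<^sub>R 0 = 0\<close>, is a null set.\<close>
  have "AE x in lborel. x \<noteq> (0 :: real^'n)"
    by (rule AE_lborel_singleton)
  then have "AE x in lborel. x \<in> ball (0 :: real^'n) 1 \<longrightarrow> norm (x /\<^sub>R norm x) = 1"
    by (rule AE_mp) (intro AE_I2, simp)
  then have "AE x in uniform_measure lborel (ball (0 :: real^'n) 1). norm (x /\<^sub>R norm x) = 1"
    by (rule AE_uniform_measureI[rotated]) simp
  moreover have "(\<lambda>x. x /\<^sub>R norm x) \<in> uniform_measure lborel (ball (0 :: real^'n) 1) \<rightarrow>\<^sub>M borel"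
    by (simp add: measurable_cong_sets[OF sets_uniform_measure refl])
  moreover have "{u \<in> space borel. norm (u :: real^'n) = 1} \<in> sets borel"
    by measurable
  ultimately show ?thesis
    unfolding unif_sphere_def by (simp add: AE_distr_iff)
qed

lemma measure_unif_sphere_cball:
  "measure (unif_sphere :: (real^'n) measure) (cball w \<eta>)
     = measure lborel (spherical_sector w \<eta>) / measure lborel (ball (0 :: real^'n) 1)"
proof -
  let ?f = "\<lambda>x :: real^'n. x /\<^sub>R norm x"
  have "?f \<in> borel_measurable borel"
    by measurable
  then have f: "?f \<in> uniform_measure lborel (ball 0 1) \<rightarrow>\<^sub>M borel"
    "?f -` cball w \<eta> \<in> sets lborel"
    using measurable_sets_borel[of ?f borel "cball w \<eta>"] by simp_all
  have "measure unif_sphere (cball w \<eta>)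
      = measure (uniform_measure lborel (ball 0 1)) (?f -` cball w \<eta>)"
    unfolding unif_sphere_def using f by (simp add: measure_distr)
  also have "\<dots>
      = measure lborel (ball 0 1 \<inter> ?f -` cball w \<eta>) / measure lborel (ball (0 :: real^'n) 1)"
    using f
    by (intro measure_uniform_measure emeasure_lborel_ball_neq_0 emeasure_lborel_ball_neq_infinity)
      simp_all
  also have "ball 0 1 \<inter> ?f -` cball w \<eta> = spherical_sector w \<eta>"
    by (auto simp: spherical_sector_def)
  finally show ?thesis .
qed

lemma measure_unif_sphere_cball_le:
  fixes w :: "real^'n"
  assumes "norm w = 1" "0 < \<eta>" "\<eta> < 1"
  shows "measure unif_sphere (cball w \<eta>) \<le> 3/2 * cap_semiaxis \<eta> ^ (CARD('n) - 1)"
  using measure_spherical_sector_le[OF assms] content_ball_pos[of 1 "0 :: real^'n"]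
  by (simp add: measure_unif_sphere_cball divide_le_eq)

lemma prob_space_unif_X: "prob_space unif_X"
  unfolding unif_X_def by (intro prob_space_pair prob_space_unif_sphere)

lemma sets_unif_X: "sets unif_X = sets borel"
proof -
  have "sets unif_X = sets (borel \<Otimes>\<^sub>M borel)"
    unfolding unif_X_def by (rule sets_pair_measure_cong[OF sets_unif_sphere sets_unif_sphere])
  then show ?thesis
    by (simp only: borel_prod)
qed

lemma AE_unif_X_norm: "AE p in unif_X. norm (fst p) = 1 \<and> norm (snd p) = 1"
proof -
  interpret pair_prob_space unif_sphere unif_sphere
    by (simp add: pair_prob_space_def pair_sigma_finite_def prob_space_unif_sphere
        prob_space_imp_sigma_finite)
  have eq: "{p \<in> space unif_X. norm (fst p) = 1 \<and> norm (snd p) = 1} = sphere 0 1 \<times> sphere 0 1"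
    by (auto simp: sets_eq_imp_space_eq[OF sets_unif_X])
  have "{p \<in> space unif_X. norm (fst p) = 1 \<and> norm (snd p) = 1} \<in> sets unif_X"
    unfolding eq sets_unif_X by (intro borel_closed closed_Times) simp_all
  moreover have
    "AE u in unif_sphere. AE v in unif_sphere. norm (fst (u, v)) = 1 \<and> norm (snd (u, v)) = 1"
    using AE_unif_sphere_norm by eventually_elim (use AE_unif_sphere_norm in auto)
  ultimately show ?thesis
    unfolding unif_X_def by (rule AE_pair_measure)
qed

lemma measure_unif_X_cball_le:
  fixes a :: "(real^'n) \<times> (real^'n)"
  assumes "norm (fst a) = 1" "norm (snd a) = 1" "0 < \<eta>" "\<eta> < 1"
  shows "measure unif_X (cball a \<eta>) \<le> (3/2 * cap_semiaxis \<eta> ^ (CARD('n) - 1))\<^sup>2"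
proof -
  interpret S: prob_space "unif_sphere :: (real^'n) measure"
    by (rule prob_space_unif_sphere)
  interpret X: prob_space "unif_X :: ((real^'n) \<times> (real^'n)) measure"
    by (rule prob_space_unif_X)
  have "cball a \<eta> \<subseteq> cball (fst a) \<eta> \<times> cball (snd a) \<eta>"
  proof
    fix b
    assume "b \<in> cball a \<eta>"
    then have "dist (fst a) (fst b) \<le> \<eta>" "dist (snd a) (snd b) \<le> \<eta>"
      using dist_fst_le[of a b] dist_snd_le[of a b] by simp_all
    then show "b \<in> cball (fst a) \<eta> \<times> cball (snd a) \<eta>"
      by (simp add: mem_Times_iff)
  qed
  then have "measure unif_X (cball a \<eta>) \<le> measure unif_X (cball (fst a) \<eta> \<times> cball (snd a) \<eta>)"
    by (intro X.finite_measure_mono) (simp_all add: sets_unif_X borel_closed closed_Times)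
  also have "\<dots> = measure unif_sphere (cball (fst a) \<eta>) * measure unif_sphere (cball (snd a) \<eta>)"
    unfolding unif_X_def measure_def
    by (simp add: S.emeasure_pair_measure_Times sets_unif_sphere enn2real_mult)
  also have "\<dots> \<le> (3/2 * cap_semiaxis \<eta> ^ (CARD('n) - 1))\<^sup>2"
    unfolding power2_eq_square using assms cap_semiaxis_pos[OF assms(3,4)]
    by (intro mult_mono measure_unif_sphere_cball_le) simp_all
  finally show ?thesis .
qed

section \<open>Close pairs among independent samples\<close>

lemma sets_pair_dist_le:
  fixes M :: "'a::{metric_space, second_countable_topology} measure"
  assumes "sets M = sets borel"
  shows "{(a, b). dist a b \<le> r} \<in> sets (M \<Otimes>\<^sub>M M)"
proof -
  have "sets (M \<Otimes>\<^sub>M M) = sets (borel \<Otimes>\<^sub>M borel)"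
    by (rule sets_pair_measure_cong[OF assms assms])
  then have "sets (M \<Otimes>\<^sub>M M) = sets borel"
    by (simp only: borel_prod)
  moreover have "closed {p :: 'a \<times> 'a. dist (fst p) (snd p) \<le> r}"
    by (intro closed_Collect_le continuous_intros)
  moreover have "{(a, b). dist a b \<le> r} = {p :: 'a \<times> 'a. dist (fst p) (snd p) \<le> r}"
    by auto
  ultimately show ?thesis
    by (simp add: borel_closed)
qed

lemma measure_pair_dist_le:
  fixes M :: "'a::{metric_space, second_countable_topology} measure"
  assumes M: "prob_space M" "sets M = sets borel"
    and cball: "AE a in M. measure M (cball a r) \<le> K"
  shows "measure (M \<Otimes>\<^sub>M M) {(a, b). dist a b \<le> r} \<le> K"
proof -
  interpret prob_space M
    by (fact M(1))
  interpret MM: prob_space "M \<Otimes>\<^sub>M M"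
    by (simp add: M(1) prob_space_pair)
  let ?D = "{(a, b). dist a b \<le> r}"
  have "AE a in M. 0 \<le> K"
    using cball by eventually_elim (rule order_trans[OF measure_nonneg])
  then have "0 \<le> K"
    by simp
  have "emeasure (M \<Otimes>\<^sub>M M) ?D = (\<integral>\<^sup>+a. emeasure M (Pair a -` ?D) \<partial>M)"
    by (rule emeasure_pair_measure_alt[OF sets_pair_dist_le[OF M(2)]])
  also have "\<dots> \<le> (\<integral>\<^sup>+a. ennreal K \<partial>M)"
  proof (rule nn_integral_mono_AE)
    have pre: "Pair a -` ?D = cball a r" for a
      by (auto simp: mem_cball)
    show "AE a in M. emeasure M (Pair a -` ?D) \<le> ennreal K"
      unfolding pre using cball by eventually_elim (simp add: emeasure_eq_measure ennreal_leI)
  qed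
  also have "\<dots> = ennreal K"
    by (simp add: emeasure_space_1)
  finally show ?thesis
    using \<open>0 \<le> K\<close> by (simp add: MM.emeasure_eq_measure)
qed

lemma distr_PiM_components_pair:
  assumes M: "prob_space M" and ij: "i \<in> I" "j \<in> I" "i \<noteq> j"
  shows "distr (PiM I (\<lambda>_. M)) (M \<Otimes>\<^sub>M M) (\<lambda>\<omega>. (\<omega> i, \<omega> j)) = M \<Otimes>\<^sub>M M"
proof -
  let ?P = "PiM I (\<lambda>_. M)" and ?B = "PiM (UNIV :: bool set) (\<lambda>_. M)"
  define f where "f b = (if b then i else j)" for b
  define g where "g \<omega> = (\<lambda>b\<in>UNIV. \<omega> (f b))" for \<omega> :: "_ \<Rightarrow> 'a"
  define h where "h x = (x True, x False)" for x :: "bool \<Rightarrow> 'a"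
  have "inj_on f UNIV" "f \<in> UNIV \<rightarrow> I"
    using ij by (auto simp: inj_on_def f_def)
  then have g: "distr ?P ?B g = ?B"
    unfolding g_def using distr_PiM_reindex[of I "\<lambda>_. M" f UNIV] M by simp
  have "case_bool M M = (\<lambda>_. M)"
    by (simp add: fun_eq_iff split: bool.split)
  then have h: "M \<Otimes>\<^sub>M M = distr ?B (M \<Otimes>\<^sub>M M) h"
    using pair_measure_eq_distr_PiM[of M M] M unfolding h_def
    by (simp add: prob_space_imp_sigma_finite)
  have "g \<in> ?P \<rightarrow>\<^sub>M ?B"
    using \<open>f \<in> UNIV \<rightarrow> I\<close> unfolding g_def
    by (intro measurable_restrict measurable_component_singleton) auto
  moreover have "h \<in> ?B \<rightarrow>\<^sub>M M \<Otimes>\<^sub>M M"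
    unfolding h_def by measurable
  moreover have "h \<circ> g = (\<lambda>\<omega>. (\<omega> i, \<omega> j))"
    by (auto simp: h_def g_def f_def)
  ultimately have "distr ?P (M \<Otimes>\<^sub>M M) (\<lambda>\<omega>. (\<omega> i, \<omega> j)) = distr (distr ?P ?B g) (M \<Otimes>\<^sub>M M) h"
    by (simp add: distr_distr)
  then show ?thesis
    using g h by simp
qed

lemma
  assumes M: "prob_space M" and ij: "i \<in> I" "j \<in> I" "i \<noteq> j" and A: "A \<in> sets (M \<Otimes>\<^sub>M M)"
  shows sets_PiM_components_pair:
      "{\<omega> \<in> space (PiM I (\<lambda>_. M)). (\<omega> i, \<omega> j) \<in> A} \<in> sets (PiM I (\<lambda>_. M))"
    and measure_PiM_components_pair:
      "measure (PiM I (\<lambda>_. M)) {\<omega> \<in> space (PiM I (\<lambda>_. M)). (\<omega> i, \<omega> j) \<in> A} = measure (M \<Otimes>\<^sub>M M) A"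
proof -
  let ?P = "PiM I (\<lambda>_. M)" and ?p = "\<lambda>\<omega>. (\<omega> i, \<omega> j)"
  have p: "?p \<in> ?P \<rightarrow>\<^sub>M M \<Otimes>\<^sub>M M"
    using ij by measurable
  have eq: "?p -` A \<inter> space ?P = {\<omega> \<in> space ?P. (\<omega> i, \<omega> j) \<in> A}"
    by auto
  show "{\<omega> \<in> space ?P. (\<omega> i, \<omega> j) \<in> A} \<in> sets ?P"
    using measurable_sets[OF p A] by (simp only: eq)
  have "measure (M \<Otimes>\<^sub>M M) A = measure (distr ?P (M \<Otimes>\<^sub>M M) ?p) A"
    by (simp add: distr_PiM_components_pair[OF M ij])
  also have "\<dots> = measure ?P {\<omega> \<in> space ?P. (\<omega> i, \<omega> j) \<in> A}"
    by (simp only: measure_distr[OF p A] eq)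
  finally show "measure ?P {\<omega> \<in> space ?P. (\<omega> i, \<omega> j) \<in> A} = measure (M \<Otimes>\<^sub>M M) A" ..
qed

lemma measure_PiM_exists_pair_le:
  assumes M: "prob_space M" and R: "{(a, b). R a b} \<in> sets (M \<Otimes>\<^sub>M M)"
    and sym: "\<And>a b. R a b \<Longrightarrow> R b a"
  shows "measure (PiM {..<m} (\<lambda>_. M))
           {x \<in> space (PiM {..<m} (\<lambda>_. M)). \<exists>i<m. \<exists>j<m. i \<noteq> j \<and> R (x i) (x j)}
         \<le> real m * (real m - 1) / 2 * measure (M \<Otimes>\<^sub>M M) {(a, b). R a b}"
proof -
  let ?P = "PiM {..<m} (\<lambda>_. M)" and ?p = "measure (M \<Otimes>\<^sub>M M) {(a, b). R a b}"
  interpret P: prob_space ?P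
    using M by (simp add: prob_space_PiM)
  define E where "E i j = {x \<in> space ?P. (x i, x j) \<in> {(a, b). R a b}}" for i j
  have E: "E i j \<in> sets ?P" "measure ?P (E i j) = ?p" if "i < j" "j < m" for i j
    using that sets_PiM_components_pair[OF M _ _ _ R, where i = i and j = j and I = "{..<m}"]
      measure_PiM_components_pair[OF M _ _ _ R, where i = i and j = j and I = "{..<m}"]
    unfolding E_def by simp_all
  have "{x \<in> space ?P. \<exists>i<m. \<exists>j<m. i \<noteq> j \<and> R (x i) (x j)} = (\<Union>j<m. \<Union>i<j. E i j)"
    unfolding E_def by (auto dest: sym simp: neq_iff) (use less_trans in blast)
  also have "measure ?P \<dots> \<le> (\<Sum>j<m. measure ?P (\<Union>i<j. E i j))"
    using E by (intro P.finite_measure_subadditive_finite) auto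
  also have "\<dots> \<le> (\<Sum>j<m. \<Sum>i<j. measure ?P (E i j))"
    using E by (intro sum_mono P.finite_measure_subadditive_finite) auto
  also have "\<dots> = (\<Sum>j<m. real j * ?p)"
    using E by simp
  also have "\<dots> = real m * (real m - 1) / 2 * ?p"
    by (induction m) (simp_all add: field_simps)
  finally show ?thesis .
qed

lemma cap_bound_sq_le:
  assumes "0 < \<eta>" "\<eta> < 1" "1 \<le> D"
  shows "(3/2 * cap_semiaxis \<eta> ^ D)\<^sup>2 \<le> 2 * \<eta> ^ D"
proof -
  define q where "q = 9/8 * \<eta> * (1 - \<eta>\<^sup>2/4)"
  have \<beta>: "(cap_semiaxis \<eta>)\<^sup>2 = \<eta> * q"
    unfolding cap_semiaxis_sq[OF assms(1,2)] q_def by (simp add: power2_eq_square field_simps)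
  have "\<eta>\<^sup>2 < 1"
    using assms by (simp add: abs_square_less_1)
  then have "0 \<le> q"
    using assms by (simp add: q_def)
  \<comment> \<open>\<open>27/32 - q = 9/32 * (1 - \<eta>) * (3 - \<eta> - \<eta>\<^sup>2)\<close>\<close>
  have "0 \<le> (1 - \<eta>) * (3 - \<eta> - \<eta>\<^sup>2)"
    using assms \<open>\<eta>\<^sup>2 < 1\<close> by (intro mult_nonneg_nonneg) auto
  then have "q \<le> 27/32"
    by (simp add: q_def power2_eq_square algebra_simps)
  have "(cap_semiaxis \<eta> ^ D)\<^sup>2 = ((cap_semiaxis \<eta>)\<^sup>2) ^ D"
    by (simp add: mult.commute flip: power_mult)
  then have "(3/2 * cap_semiaxis \<eta> ^ D)\<^sup>2 = 9/4 * (\<eta> ^ D * q ^ D)"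
    by (simp only: power_mult_distrib \<beta>) (simp add: power2_eq_square)
  also have "\<dots> \<le> 9/4 * (\<eta> ^ D * q)"
    using power_decreasing[OF assms(3) \<open>0 \<le> q\<close>] \<open>q \<le> 27/32\<close> assms(1)
    by (intro mult_left_mono) simp_all
  also have "\<dots> \<le> 2 * \<eta> ^ D"
    using \<open>q \<le> 27/32\<close> assms(1) by (simp add: mult_left_mono)
  finally show ?thesis .
qed

theorem lemma16:
  fixes m :: nat and \<eta> :: real
  assumes "CARD('n::finite) \<ge> 2" and "m \<ge> 2" and "0 < \<eta>" and "\<eta> < 1"
  shows "measure (PiM {..<m} (\<lambda>_. (unif_X :: ((real^'n) \<times> (real^'n)) measure)))
           {x \<in> space (PiM {..<m} (\<lambda>_. (unif_X :: ((real^'n) \<times> (real^'n)) measure))).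
              \<exists>i<m. \<exists>j<m. i \<noteq> j \<and> dist (x i) (x j) \<le> \<eta>}
         < real m ^ 2 * \<eta> ^ (CARD('n) - 1)"
proof -
  let ?X = "unif_X :: ((real^'n) \<times> (real^'n)) measure"
  define K where "K = 3/2 * cap_semiaxis \<eta> ^ (CARD('n) - 1)"
  have "AE a in ?X. measure ?X (cball a \<eta>) \<le> K\<^sup>2"
    using AE_unif_X_norm
    by eventually_elim (unfold K_def, intro measure_unif_X_cball_le, use assms in simp_all)
  then have "measure (?X \<Otimes>\<^sub>M ?X) {(a, b). dist a b \<le> \<eta>} \<le> K\<^sup>2"
    by (rule measure_pair_dist_le[OF prob_space_unif_X sets_unif_X])
  also have "K\<^sup>2 \<le> 2 * \<eta> ^ (CARD('n) - 1)"
    unfolding K_def using assms by (intro cap_bound_sq_le) simp_all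
  finally have pair: "measure (?X \<Otimes>\<^sub>M ?X) {(a, b). dist a b \<le> \<eta>} \<le> 2 * \<eta> ^ (CARD('n) - 1)" .
  have "measure (PiM {..<m} (\<lambda>_. ?X))
      {x \<in> space (PiM {..<m} (\<lambda>_. ?X)). \<exists>i<m. \<exists>j<m. i \<noteq> j \<and> dist (x i) (x j) \<le> \<eta>}
      \<le> real m * (real m - 1) / 2 * measure (?X \<Otimes>\<^sub>M ?X) {(a, b). dist a b \<le> \<eta>}"
    by (rule measure_PiM_exists_pair_le)
      (simp_all add: prob_space_unif_X sets_pair_dist_le sets_unif_X dist_commute)
  also have "\<dots> \<le> real m * (real m - 1) * \<eta> ^ (CARD('n) - 1)"
    using pair assms(2) by (simp add: mult_left_mono)
  also have "\<dots> < real m ^ 2 * \<eta> ^ (CARD('n) - 1)"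
    using assms by (simp add: power2_eq_square)
  finally show ?thesis .
qed

end
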